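(* Let $G$ be a finite group and let $M,N_1,N_2$ be normal subgroups of $G$. If $(G,N_1,M)$ and $(G,N_2,M)$ are Camina triples, then $(G,N_1\cap N_2,M)$ is a Camina triple.
   Context: For normal subgroups $M,N$ of a finite group $G$, $(G,N,M)$ is a Camina triple if $1<M\le N<G$ and every $g\in G\setminus N$ is conjugate in $G$ to every element of the coset $gM$. *)

theory Defs
  imports "HOL-Algebra.Algebra"
begin

definition conjugate_in :: "('a, 'b) monoid_scheme \<Rightarrow> 'a \<Rightarrow> 'a \<Rightarrow> bool" where
  "conjugate_in G g h \<longleftrightarrow>
     (\<exists>x\<in>carrier G. x \<otimes>\<^bsub>G\<^esub> g \<otimes>\<^bsub>G\<^esub> inv\<^bsub>G\<^esub> x = h)"

definition camina_triple :: "('a, 'b) monoid_scheme \<Rightarrow> 'a set \<Rightarrow> 'a set \<Rightarrow> bool" where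
  "camina_triple G N M \<longleftrightarrow>
     M \<lhd> G \<and> N \<lhd> G \<and>
     M \<noteq> {\<one>\<^bsub>G\<^esub>} \<and> M \<subseteq> N \<and> N \<noteq> carrier G \<and>
     (\<forall>g \<in> carrier G - N. \<forall>h \<in> g <#\<^bsub>G\<^esub> M. conjugate_in G g h)"

end

theory Submission
  imports Defs
begin

text \<open>An element outside \<open>N1 \<inter> N2\<close> lies outside \<open>N1\<close> or outside \<open>N2\<close>, and the
  conjugacy condition of the corresponding triple applies to it.\<close>

lemma (in group) camina_triple_Int:
  assumes C1: "camina_triple G N1 M" and C2: "camina_triple G N2 M"
  shows "camina_triple G (N1 \<inter> N2) M"
proof -
  have N1: "N1 \<lhd> G" and N2: "N2 \<lhd> G" and M: "M \<lhd> G" "M \<noteq> {\<one>}"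
    and M_sub: "M \<subseteq> N1" "M \<subseteq> N2" and N1_proper: "N1 \<noteq> carrier G"
    using C1 C2 unfolding camina_triple_def by auto
  have "N1 \<subseteq> carrier G"
    using N1 normal_imp_subgroup subgroup.subset by blast
  then have proper: "N1 \<inter> N2 \<noteq> carrier G"
    using N1_proper by blast
  have "conjugate_in G g h" if "g \<in> carrier G - (N1 \<inter> N2)" "h \<in> g <# M" for g h
  proof (cases "g \<in> N1")
    case True
    with that C2 show ?thesis unfolding camina_triple_def by blast
  next
    case False
    with that C1 show ?thesis unfolding camina_triple_def by blast
  qed
  with normal_subgroup_intersect[OF N1 N2] M M_sub proper show ?thesis
    unfolding camina_triple_def by blast
qed

theorem mainTheorem7:
  fixes G (structure)
  assumes "group G" and "finite (carrier G)"
    and "M \<lhd> G" and "N1 \<lhd> G" and "N2 \<lhd> G"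
    and "camina_triple G N1 M" and "camina_triple G N2 M"
  shows "camina_triple G (N1 \<inter> N2) M"
  using group.camina_triple_Int[OF assms(1,6,7)] .

end
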